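(* Let $(X,\kappa)$ be a $\kappa$-connected digital image with more than one point. Then every constant map $f: X \to X$ is digitally homotopic to a map $g: X \to X$ that has no fixed points.
   Context: A digital image is a pair $(X,\kappa)$ with $X \subset \mathbb{Z}^n$ and $\kappa$ an adjacency relation on $X$; it is $\kappa$-connected if any two points are joined by a finite sequence of points of $X$ with consecutive points $\kappa$-adjacent. A function $h:(X,\kappa)\to(X,\kappa)$ is continuous if $x \leftrightarrow_\kappa x'$ implies $h(x)=h(x')$ or $h(x)\leftrightarrow_\kappa h(x')$. Two continuous maps $f,g: X\to X$ are (digitally) homotopic if there are $m \in \mathbb{N}$ and $F: X \times [0,m]_{\mathbb{Z}} \to X$ with $F(x,0)=f(x)$, $F(x,m)=g(x)$ for all $x$, each $x \mapsto F(x,t)$ continuous, and each $t\mapsto F(x,t)$ continuous from $[0,m]_{\mathbb{Z}}$ with $2$-adjacency (consecutive integers adjacent) to $(X,\kappa)$. *)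

theory Defs
  imports "HOL-Analysis.Analysis"
begin

definition adjacency :: "('p \<Rightarrow> 'p \<Rightarrow> bool) \<Rightarrow> bool" where
  "adjacency \<kappa> \<longleftrightarrow> (\<forall>x y. \<kappa> x y \<longrightarrow> \<kappa> y x) \<and> (\<forall>x. \<not> \<kappa> x x)"

definition digitally_connected :: "'p set \<Rightarrow> ('p \<Rightarrow> 'p \<Rightarrow> bool) \<Rightarrow> bool" where
  "digitally_connected X \<kappa> \<longleftrightarrow>
     (\<forall>x\<in>X. \<forall>y\<in>X. \<exists>p::nat \<Rightarrow> 'p. \<exists>m. p 0 = x \<and> p m = y \<and> (\<forall>i\<le>m. p i \<in> X)
        \<and> (\<forall>i<m. \<kappa> (p i) (p (Suc i))))"

definition digitally_continuous ::
  "'p set \<Rightarrow> ('p \<Rightarrow> 'p \<Rightarrow> bool) \<Rightarrow> 'q set \<Rightarrow> ('q \<Rightarrow> 'q \<Rightarrow> bool) \<Rightarrow> ('p \<Rightarrow> 'q) \<Rightarrow> bool" where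
  "digitally_continuous X kX Y kY h \<longleftrightarrow>
     (\<forall>x\<in>X. h x \<in> Y) \<and>
     (\<forall>x\<in>X. \<forall>x'\<in>X. kX x x' \<longrightarrow> h x = h x' \<or> kY (h x) (h x'))"

definition adj2 :: "nat \<Rightarrow> nat \<Rightarrow> bool" where
  "adj2 s t \<longleftrightarrow> s = Suc t \<or> t = Suc s"

definition digitally_homotopic ::
  "'p set \<Rightarrow> ('p \<Rightarrow> 'p \<Rightarrow> bool) \<Rightarrow> ('p \<Rightarrow> 'p) \<Rightarrow> ('p \<Rightarrow> 'p) \<Rightarrow> bool" where
  "digitally_homotopic X \<kappa> f g \<longleftrightarrow>
     (\<exists>m::nat. \<exists>F :: 'p \<Rightarrow> nat \<Rightarrow> 'p.
        (\<forall>x\<in>X. F x 0 = f x \<and> F x m = g x) \<and>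
        (\<forall>t\<le>m. digitally_continuous X \<kappa> X \<kappa> (\<lambda>x. F x t)) \<and>
        (\<forall>x\<in>X. digitally_continuous {0..m} adj2 X \<kappa> (F x)))"

end

theory Submission
  imports Defs
begin

text \<open>Since X is connected and has a point other than c, the constant c has a neighbour d.
  The map sending c to d and every other point to c has no fixed point, takes values in
  the adjacent pair {c, d}, and differs from the constant map c only by an adjacency at each
  point, so a homotopy of length one connects the two maps.\<close>

lemma digitally_connected_obtain_neighbour:
  assumes "digitally_connected X \<kappa>" and "c \<in> X" "y \<in> X" "y \<noteq> c"
  obtains d where "d \<in> X" "\<kappa> c d"
proof -
  obtain p m where p: "p 0 = c" "p m = y" "\<forall>i\<le>m. p i \<in> X" "\<forall>i<m. \<kappa> (p i) (p (Suc i))"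
    using assms unfolding digitally_connected_def by blast
  have "m > 0"
    using p(1,2) \<open>y \<noteq> c\<close> by (cases m) auto
  with p show thesis
    using that[of "p 1"] by auto
qed

lemma digitally_continuous_const:
  assumes "c \<in> Y"
  shows "digitally_continuous X kX Y kY (\<lambda>x. c)"
  using assms unfolding digitally_continuous_def by simp

lemma digitally_continuous_into_adjacent_pair:
  assumes "adjacency kY" and "c \<in> Y" "d \<in> Y" "kY c d"
    and "\<forall>x\<in>X. h x \<in> {c, d}"
  shows "digitally_continuous X kX Y kY h"
proof -
  have "kY d c"
    using assms(1,4) unfolding adjacency_def by blast
  then have "h x = h x' \<or> kY (h x) (h x')" if "x \<in> X" "x' \<in> X" for x x'
  proof -
    have "h x \<in> {c, d}" "h x' \<in> {c, d}"
      using assms(5) that by blast+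
    with \<open>kY d c\<close> assms(4) show ?thesis
      by auto
  qed
  with assms(2,3,5) show ?thesis
    unfolding digitally_continuous_def by auto
qed

lemma adjacent_maps_digitally_homotopic:
  assumes "adjacency \<kappa>"
    and f: "digitally_continuous X \<kappa> X \<kappa> f"
    and g: "digitally_continuous X \<kappa> X \<kappa> g"
    and adjacent: "\<forall>x\<in>X. f x = g x \<or> \<kappa> (f x) (g x)"
  shows "digitally_homotopic X \<kappa> f g"
proof -
  define F where "F x t = (if t = 0 then f x else g x)" for x and t :: nat
  have "digitally_continuous X \<kappa> X \<kappa> (\<lambda>x. F x t)" for t
    using f g by (cases "t = 0") (simp_all add: F_def)
  moreover have "digitally_continuous {0..1} adj2 X \<kappa> (F x)" if "x \<in> X" for x
  proof -
    have "\<kappa> (g x) (f x)" if "\<kappa> (f x) (g x)"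
      using assms(1) that unfolding adjacency_def by blast
    then show ?thesis
      using \<open>x \<in> X\<close> f g adjacent
      unfolding digitally_continuous_def F_def adj2_def by auto
  qed
  ultimately show ?thesis
    unfolding digitally_homotopic_def by (intro exI[of _ 1] exI[of _ F]) (simp add: F_def)
qed

theorem mainTheorem11:
  fixes X :: "(int ^ 'n) set" and \<kappa> :: "int ^ 'n \<Rightarrow> int ^ 'n \<Rightarrow> bool"
    and c :: "int ^ 'n"
  assumes "adjacency \<kappa>"
    and "digitally_connected X \<kappa>"
    and "\<exists>x\<in>X. \<exists>y\<in>X. x \<noteq> y"
    and "c \<in> X"
  shows "\<exists>g. digitally_continuous X \<kappa> X \<kappa> g \<and>
             digitally_homotopic X \<kappa> (\<lambda>x. c) g \<and>
             (\<forall>x\<in>X. g x \<noteq> x)"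
proof -
  obtain y where "y \<in> X" "y \<noteq> c"
    using assms(3) by blast
  then obtain d where d: "d \<in> X" "\<kappa> c d"
    using assms(2,4) digitally_connected_obtain_neighbour by metis
  have "d \<noteq> c"
    using assms(1) d(2) unfolding adjacency_def by blast
  define g where "g x = (if x = c then d else c)" for x
  have g_cont: "digitally_continuous X \<kappa> X \<kappa> g"
    by (rule digitally_continuous_into_adjacent_pair[OF assms(1,4) d]) (simp add: g_def)
  have "digitally_homotopic X \<kappa> (\<lambda>x. c) g"
    using d(2) by (intro adjacent_maps_digitally_homotopic[OF assms(1)]
        digitally_continuous_const[OF assms(4)] g_cont) (simp add: g_def)
  moreover have "\<forall>x\<in>X. g x \<noteq> x"
    using \<open>d \<noteq> c\<close> by (simp add: g_def)
  ultimately show ?thesis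
    using g_cont by blast
qed

end
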